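(* Let $T=(T_a,T_b)$ be a rooted binary tree on $n$ leaves, where $T_a,T_b$ have $n_a,n_b$ leaves. If $T$ has minimal Colless index among rooted binary trees with $n$ leaves, then $T_a$ has minimal Colless index among rooted binary trees with $n_a$ leaves and $T_b$ has minimal Colless index among rooted binary trees with $n_b$ leaves.
   Context: A rooted binary tree with $n\geq 2$ leaves is a rooted tree whose root has degree 2 and all other internal nodes have degree 3; for $n=1$ it is a single node. $T=(T_a,T_b)$ denotes the decomposition into the subtrees rooted at the two children of the root. For an internal node $v$ with children $v_1,v_2$, let $\kappa(v_i)$ be the number of leaves descending from $v_i$ ($1$ if a leaf). The Colless index is $\mathcal{C}(T)=\sum_v|\kappa(v_1)-\kappa(v_2)|$ over internal nodes $v$. *)

theory Defs
  imports Main
begin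

datatype rbtree = Leaf | Node rbtree rbtree

fun leaves :: "rbtree \<Rightarrow> nat" where
  "leaves Leaf = 1"
| "leaves (Node l r) = leaves l + leaves r"

fun colless :: "rbtree \<Rightarrow> nat" where
  "colless Leaf = 0"
| "colless (Node l r) = colless l + colless r
     + nat \<bar>int (leaves l) - int (leaves r)\<bar>"

definition colless_minimal :: "rbtree \<Rightarrow> bool" where
  "colless_minimal t \<longleftrightarrow> (\<forall>t'. leaves t' = leaves t \<longrightarrow> colless t \<le> colless t')"

end

theory Submission
  imports Defs
begin

text \<open>The Colless index of \<open>Node l r\<close> depends on the subtrees only through their Colless
  indices and leaf counts, so exchanging one subtree for a cheaper one with the same number of
  leaves makes the whole tree cheaper.\<close>

lemma colless_minimal_left:
  assumes "colless_minimal (Node l r)"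
  shows "colless_minimal l"
  unfolding colless_minimal_def
proof (intro allI impI)
  fix l' assume "leaves l' = leaves l"
  moreover from this have "colless (Node l r) \<le> colless (Node l' r)"
    using assms unfolding colless_minimal_def by (metis leaves.simps(2))
  ultimately show "colless l \<le> colless l'" by simp
qed

lemma colless_minimal_Node_swap:
  "colless_minimal (Node l r) \<longleftrightarrow> colless_minimal (Node r l)"
  by (simp add: colless_minimal_def abs_minus_commute add_ac)

theorem lemma2:
  fixes Ta Tb :: rbtree
  assumes "colless_minimal (Node Ta Tb)"
  shows "colless_minimal Ta \<and> colless_minimal Tb"
  using assms colless_minimal_left colless_minimal_Node_swap by blast

end
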